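(* Let $(X,\mu)$ and $(Y,\nu)$ be probability spaces and $R$ a measure on $X\times Y$. For $\phi\colon Y\to\mathbb{R}$ let $$\phi^+(x)=\ln\Big(\int_Y e^{\phi(y)}\,R(dx,dy)/\mu(dx)\Big)$$ (a Radon--Nikodym derivative, assumed well-defined). Let $F(\phi)=\int_X\phi^+\,d\mu$ and let $F^*$ be its convex conjugate. Let $\phi,\widetilde\phi\colon Y\to\mathbb{R}$ be two potentials. Set $$\pi(dx,dy)=e^{\phi(y)-\phi^+(x)}R(dx,dy),\qquad \widetilde\pi(dx,dy)=e^{\widetilde\phi(y)-\widetilde\phi^+(x)}R(dx,dy),$$ and let $\rho$ and $\widetilde\rho$ be their respective $Y$-marginals. Then $$F(\phi|\widetilde\phi)=F^*(\widetilde\rho|\rho)=H(\widetilde\pi|\pi),$$ where $H(\widetilde\pi|\pi)=\iint\ln(\widetilde\pi/\pi)\,d\widetilde\pi$.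
   Context: For a differentiable convex functional $G$, its Bregman divergence is $$G(a|b)=G(a)-G(b)-\langle G'(b),a-b\rangle,$$ where $G'$ is the derivative (first variation) and $\langle\cdot,\cdot\rangle$ is the pairing between functions and measures, $\langle\phi,\rho\rangle=\int\phi\,d\rho$. The convex conjugate is $F^*(\rho)=\sup_\phi\langle\phi,\rho\rangle-F(\phi)$. One has $F'(\phi)=\rho$ and $F'(\widetilde\phi)=\widetilde\rho$, and the $X$-marginals of $\pi$ and $\widetilde\pi$ are $\mu$. *)

theory Defs
  imports "HOL-Probability.Probability"
begin

definition xmarg_exp :: "'a measure \<Rightarrow> ('a \<times> 'b) measure \<Rightarrow> ('b \<Rightarrow> real) \<Rightarrow> 'a measure" where
  "xmarg_exp M R \<phi> = distr (density R (\<lambda>p. ennreal (exp (\<phi> (snd p))))) M fst"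

definition cplus :: "'a measure \<Rightarrow> ('a \<times> 'b) measure \<Rightarrow> ('b \<Rightarrow> real) \<Rightarrow> 'a \<Rightarrow> real" where
  "cplus M R \<phi> x = ln (enn2real (RN_deriv M (xmarg_exp M R \<phi>) x))"

definition cplus_welldef :: "'a measure \<Rightarrow> ('a \<times> 'b) measure \<Rightarrow> ('b \<Rightarrow> real) \<Rightarrow> bool" where
  "cplus_welldef M R \<phi> \<longleftrightarrow>
     (\<exists>g \<in> borel_measurable M. (\<forall>x. 0 < g x) \<and> xmarg_exp M R \<phi> = density M (\<lambda>x. ennreal (g x)))"

definition Ffun :: "'a measure \<Rightarrow> ('a \<times> 'b) measure \<Rightarrow> ('b \<Rightarrow> real) \<Rightarrow> real" where
  "Ffun M R \<phi> = (\<integral>x. cplus M R \<phi> x \<partial>M)"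

definition Fdom :: "'a measure \<Rightarrow> 'b measure \<Rightarrow> ('a \<times> 'b) measure \<Rightarrow> ('b \<Rightarrow> real) \<Rightarrow> bool" where
  "Fdom M N R \<phi> \<longleftrightarrow> \<phi> \<in> borel_measurable N \<and> cplus_welldef M R \<phi> \<and> integrable M (cplus M R \<phi>)"

definition Fstar :: "'a measure \<Rightarrow> 'b measure \<Rightarrow> ('a \<times> 'b) measure \<Rightarrow> 'b measure \<Rightarrow> ereal" where
  "Fstar M N R \<rho> = (SUP \<psi> \<in> {\<psi>. Fdom M N R \<psi> \<and> integrable \<rho> \<psi>}.
                       ereal ((\<integral>y. \<psi> y \<partial>\<rho>) - Ffun M R \<psi>))"

definition gibbs :: "'a measure \<Rightarrow> ('a \<times> 'b) measure \<Rightarrow> ('b \<Rightarrow> real) \<Rightarrow> ('a \<times> 'b) measure" where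
  "gibbs M R \<phi> = density R (\<lambda>p. ennreal (exp (\<phi> (snd p) - cplus M R \<phi> (fst p))))"

definition ymarg :: "'b measure \<Rightarrow> ('a \<times> 'b) measure \<Rightarrow> 'b measure" where
  "ymarg N \<pi> = distr \<pi> N snd"

text \<open>Bregman divergence of F:  F(a|b) = F(a) - F(b) - <F'(b), a - b>,  with F'(b) = rho_b.\<close>
definition bregman_F :: "'a measure \<Rightarrow> 'b measure \<Rightarrow> ('a \<times> 'b) measure \<Rightarrow> ('b \<Rightarrow> real) \<Rightarrow> ('b \<Rightarrow> real) \<Rightarrow> real" where
  "bregman_F M N R \<phi> \<phi>' = Ffun M R \<phi> - Ffun M R \<phi>'
     - (\<integral>y. \<phi> y - \<phi>' y \<partial>(ymarg N (gibbs M R \<phi>')))"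

text \<open>Bregman divergence of F*:  F*(rho'|rho) = F*(rho') - F*(rho) - <(F*)'(rho), rho' - rho>,
  where (F*)'(rho) = phi for rho = F'(phi); the pairing is  int phi d rho' - int phi d rho.\<close>
definition bregman_Fstar :: "'a measure \<Rightarrow> 'b measure \<Rightarrow> ('a \<times> 'b) measure \<Rightarrow> ('b \<Rightarrow> real)
     \<Rightarrow> 'b measure \<Rightarrow> 'b measure \<Rightarrow> ereal" where
  "bregman_Fstar M N R \<phi> \<rho>' \<rho> = Fstar M N R \<rho>' - Fstar M N R \<rho>
     - ereal ((\<integral>y. \<phi> y \<partial>\<rho>') - (\<integral>y. \<phi> y \<partial>\<rho>))"

end

(*
  The factor exp(-phi^+(x)) is the inverse density of the X-marginal of
  exp(phi(y)) R(dx,dy) with respect to mu, so every Gibbs plan pi_phi has X-marginal mu and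
  is a probability measure. Hence the log-ratio
    ln (d pi_psi / d pi_phi) = (psi(y) - psi^+(x)) - (phi(y) - phi^+(x))
  integrates against pi_psi to (<psi, rho_psi> - F psi) - (<phi, rho_psi> - F phi) = F(phi|psi),
  i.e. F(phi|psi) = H(pi_psi|pi_phi) >= 0 by Gibbs' inequality. Nonnegativity says that psi
  attains the supremum defining F*(rho_psi), so F*(rho_psi) = <psi, rho_psi> - F psi, and with
  this closed form the Bregman divergence of F* reduces to that of F.
*)
theory Submission
  imports Defs
begin

definition gibbs_logdens :: "'a measure \<Rightarrow> ('a \<times> 'b) measure \<Rightarrow> ('b \<Rightarrow> real) \<Rightarrow> 'a \<times> 'b \<Rightarrow> real" where
  "gibbs_logdens M R \<phi> p = \<phi> (snd p) - cplus M R \<phi> (fst p)"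

lemma gibbs_eq_density_logdens:
  "gibbs M R \<phi> = density R (\<lambda>p. ennreal (exp (gibbs_logdens M R \<phi> p)))"
  by (simp add: gibbs_def gibbs_logdens_def)

lemma sets_gibbs [simp, measurable_cong]: "sets (gibbs M R \<phi>) = sets R"
  by (simp add: gibbs_def)

lemma cplus_measurable [measurable]: "cplus M R \<phi> \<in> borel_measurable M"
  unfolding cplus_def by measurable

lemma AE_cplus_eq_ln_density:
  assumes "sigma_finite_measure M" and [measurable]: "g \<in> borel_measurable M"
    and g_nonneg: "\<And>x. 0 \<le> g x" and g_density: "xmarg_exp M R \<phi> = density M (\<lambda>x. ennreal (g x))"
  shows "AE x in M. cplus M R \<phi> x = ln (g x)"
proof -
  have "AE x in M. ennreal (g x) = RN_deriv M (xmarg_exp M R \<phi>) x"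
    using g_density by (intro sigma_finite_measure.RN_deriv_unique[OF assms(1)]) simp_all
  then show ?thesis
    by eventually_elim (metis cplus_def enn2real_ennreal g_nonneg)
qed

context
  fixes M :: "'a measure" and N :: "'b measure" and R :: "('a \<times> 'b) measure"
  assumes sets_R [measurable_cong]: "sets R = sets (M \<Otimes>\<^sub>M N)"
begin

lemma measurable_fst_R [measurable]: "fst \<in> measurable R M"
  using measurable_cong_sets[OF sets_R refl] by simp

lemma measurable_snd_R [measurable]: "snd \<in> measurable R N"
  using measurable_cong_sets[OF sets_R refl] by simp

lemma gibbs_logdens_measurable [measurable]:
  assumes [measurable]: "\<phi> \<in> borel_measurable N"
  shows "gibbs_logdens M R \<phi> \<in> borel_measurable R"
  unfolding gibbs_logdens_def by measurable

lemma distr_gibbs_fst: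
  assumes "sigma_finite_measure M" and [measurable]: "\<phi> \<in> borel_measurable N"
    and "cplus_welldef M R \<phi>"
  shows "distr (gibbs M R \<phi>) M fst = M"
proof -
  obtain g where [measurable]: "g \<in> borel_measurable M" and g_pos: "\<And>x. 0 < g x"
    and g_density: "xmarg_exp M R \<phi> = density M (\<lambda>x. ennreal (g x))"
    using \<open>cplus_welldef M R \<phi>\<close> unfolding cplus_welldef_def by blast
  have cplus_ln: "AE x in M. cplus M R \<phi> x = ln (g x)"
    using assms(1) g_density g_pos by (intro AE_cplus_eq_ln_density) (auto intro: less_imp_le)
  have "gibbs M R \<phi> = density (density R (\<lambda>p. ennreal (exp (\<phi> (snd p)))))
                              (\<lambda>p. ennreal (exp (- cplus M R \<phi> (fst p))))"
    by (simp add: gibbs_def density_density_eq exp_diff exp_minus divide_inverse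
        flip: ennreal_mult)
  then have "distr (gibbs M R \<phi>) M fst = density (xmarg_exp M R \<phi>) (\<lambda>x. ennreal (exp (- cplus M R \<phi> x)))"
    by (simp add: xmarg_exp_def density_distr)
  also have "\<dots> = density M (\<lambda>x. ennreal (g x) * ennreal (exp (- cplus M R \<phi> x)))"
    by (simp add: g_density density_density_eq)
  also have "\<dots> = density M (\<lambda>_. 1)"
    using cplus_ln by (intro density_cong)
      (auto elim!: eventually_mono simp: g_pos exp_minus less_imp_le less_imp_neq[symmetric]
        simp flip: ennreal_mult)
  finally show ?thesis by (simp add: density_1)
qed

lemma prob_space_gibbs:
  assumes "prob_space M" and "\<phi> \<in> borel_measurable N" and "cplus_welldef M R \<phi>"
  shows "prob_space (gibbs M R \<phi>)"
proof (rule prob_space_distrD)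
  show "fst \<in> measurable (gibbs M R \<phi>) M"
    by simp
  show "prob_space (distr (gibbs M R \<phi>) M fst)"
    using assms by (simp add: distr_gibbs_fst prob_space_imp_sigma_finite)
qed

lemma has_bochner_integral_gibbs_logdens:
  assumes "sigma_finite_measure M"
    and [measurable]: "\<psi> \<in> borel_measurable N" and "cplus_welldef M R \<psi>"
    and [measurable]: "\<phi> \<in> borel_measurable N" and "integrable M (cplus M R \<phi>)"
    and "integrable (ymarg N (gibbs M R \<psi>)) \<phi>"
  shows "has_bochner_integral (gibbs M R \<psi>) (gibbs_logdens M R \<phi>)
           ((\<integral>y. \<phi> y \<partial>ymarg N (gibbs M R \<psi>)) - Ffun M R \<phi>)"
proof -
  have "has_bochner_integral (gibbs M R \<psi>) (\<lambda>p. \<phi> (snd p)) (\<integral>y. \<phi> y \<partial>ymarg N (gibbs M R \<psi>))"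
    using \<open>integrable (ymarg N (gibbs M R \<psi>)) \<phi>\<close>
    by (simp add: has_bochner_integral_iff ymarg_def integrable_distr_eq integral_distr)
  moreover have "has_bochner_integral (gibbs M R \<psi>) (\<lambda>p. cplus M R \<phi> (fst p)) (Ffun M R \<phi>)"
  proof -
    have marginal: "distr (gibbs M R \<psi>) M fst = M"
      using assms(1-3) by (rule distr_gibbs_fst)
    have "integrable (distr (gibbs M R \<psi>) M fst) (cplus M R \<phi>)"
      using \<open>integrable M (cplus M R \<phi>)\<close> by (simp add: marginal)
    then have "has_bochner_integral (gibbs M R \<psi>) (\<lambda>p. cplus M R \<phi> (fst p))
        (\<integral>x. cplus M R \<phi> x \<partial>distr (gibbs M R \<psi>) M fst)"
      by (simp add: has_bochner_integral_iff integrable_distr_eq integral_distr)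
    then show ?thesis
      by (simp only: marginal Ffun_def)
  qed
  ultimately show ?thesis
    unfolding gibbs_logdens_def by (rule has_bochner_integral_diff)
qed

lemma has_bochner_integral_gibbs_log_ratio:
  assumes "sigma_finite_measure M"
    and [measurable]: "\<phi> \<in> borel_measurable N" "\<psi> \<in> borel_measurable N"
    and "cplus_welldef M R \<psi>"
    and "integrable M (cplus M R \<phi>)" "integrable M (cplus M R \<psi>)"
    and "integrable (ymarg N (gibbs M R \<psi>)) \<phi>" "integrable (ymarg N (gibbs M R \<psi>)) \<psi>"
  shows "has_bochner_integral (gibbs M R \<psi>)
           (\<lambda>p. gibbs_logdens M R \<psi> p - gibbs_logdens M R \<phi> p) (bregman_F M N R \<phi> \<psi>)"
proof -
  have "has_bochner_integral (gibbs M R \<psi>) (\<lambda>p. gibbs_logdens M R \<psi> p - gibbs_logdens M R \<phi> p)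
      (((\<integral>y. \<psi> y \<partial>ymarg N (gibbs M R \<psi>)) - Ffun M R \<psi>)
        - ((\<integral>y. \<phi> y \<partial>ymarg N (gibbs M R \<psi>)) - Ffun M R \<phi>))"
    using assms by (intro has_bochner_integral_diff has_bochner_integral_gibbs_logdens) simp_all
  moreover have "bregman_F M N R \<phi> \<psi> = ((\<integral>y. \<psi> y \<partial>ymarg N (gibbs M R \<psi>)) - Ffun M R \<psi>)
        - ((\<integral>y. \<phi> y \<partial>ymarg N (gibbs M R \<psi>)) - Ffun M R \<phi>)"
    using assms(7,8) by (simp add: bregman_F_def Bochner_Integration.integral_diff)
  ultimately show ?thesis
    by simp
qed

lemma density_gibbs_eq_gibbs:
  assumes [measurable]: "\<phi> \<in> borel_measurable N" "\<psi> \<in> borel_measurable N"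
  shows "density (gibbs M R \<psi>) (\<lambda>p. ennreal (exp (gibbs_logdens M R \<phi> p - gibbs_logdens M R \<psi> p)))
           = gibbs M R \<phi>"
  unfolding gibbs_eq_density_logdens[of M R \<psi>]
  by (subst density_density_eq)
     (auto intro!: arg_cong[where f = "density R"] simp: gibbs_eq_density_logdens
       simp flip: ennreal_mult exp_add)

lemma KL_gibbs_eq_bregman_F:
  assumes "prob_space M"
    and [measurable]: "\<phi> \<in> borel_measurable N" "\<psi> \<in> borel_measurable N"
    and "cplus_welldef M R \<phi>" "cplus_welldef M R \<psi>"
    and "integrable M (cplus M R \<phi>)" "integrable M (cplus M R \<psi>)"
    and "integrable (ymarg N (gibbs M R \<psi>)) \<phi>" "integrable (ymarg N (gibbs M R \<psi>)) \<psi>"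
  shows "KL_divergence (exp 1) (gibbs M R \<phi>) (gibbs M R \<psi>) = bregman_F M N R \<phi> \<psi>"
proof -
  let ?u = "\<lambda>p. gibbs_logdens M R \<psi> p - gibbs_logdens M R \<phi> p"
  interpret gibbs_\<phi>: prob_space "gibbs M R \<phi>"
    using assms by (intro prob_space_gibbs)
  have "AE p in gibbs M R \<phi>. ennreal (exp (?u p)) = RN_deriv (gibbs M R \<phi>) (gibbs M R \<psi>) p"
    by (intro gibbs_\<phi>.RN_deriv_unique density_gibbs_eq_gibbs) simp_all
  then have "AE p in density (gibbs M R \<phi>) (\<lambda>p. ennreal (exp (?u p))).
      ennreal (exp (?u p)) = RN_deriv (gibbs M R \<phi>) (gibbs M R \<psi>) p"
    by (simp add: AE_density)
  then have "AE p in gibbs M R \<psi>. ennreal (exp (?u p)) = RN_deriv (gibbs M R \<phi>) (gibbs M R \<psi>) p"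
    by (simp only: density_gibbs_eq_gibbs[OF assms(3,2)])
  then have "AE p in gibbs M R \<psi>. entropy_density (exp 1) (gibbs M R \<phi>) (gibbs M R \<psi>) p = ?u p"
  proof eventually_elim
    case (elim p)
    show ?case
      by (simp add: entropy_density_def log_def flip: elim)
  qed
  then have "KL_divergence (exp 1) (gibbs M R \<phi>) (gibbs M R \<psi>) = (\<integral>p. ?u p \<partial>gibbs M R \<psi>)"
    unfolding KL_divergence_def by (intro integral_cong_AE) simp_all
  also have "\<dots> = bregman_F M N R \<phi> \<psi>"
    using assms prob_space_imp_sigma_finite
    by (intro has_bochner_integral_integral_eq has_bochner_integral_gibbs_log_ratio) simp_all
  finally show ?thesis .
qed

lemma bregman_F_nonneg:
  assumes "prob_space M"
    and [measurable]: "\<phi> \<in> borel_measurable N" "\<psi> \<in> borel_measurable N"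
    and "cplus_welldef M R \<phi>" "cplus_welldef M R \<psi>"
    and "integrable M (cplus M R \<phi>)" "integrable M (cplus M R \<psi>)"
    and "integrable (ymarg N (gibbs M R \<psi>)) \<phi>" "integrable (ymarg N (gibbs M R \<psi>)) \<psi>"
  shows "0 \<le> bregman_F M N R \<phi> \<psi>"
proof -
  let ?u = "\<lambda>p. gibbs_logdens M R \<psi> p - gibbs_logdens M R \<phi> p"
  have gibbs_\<psi>: "gibbs M R \<psi> = density (gibbs M R \<phi>) (\<lambda>p. ennreal (exp (?u p)))"
    by (simp add: density_gibbs_eq_gibbs)
  interpret gibbs_\<phi>: information_space "gibbs M R \<phi>" "exp 1"
    using assms by (intro information_space.intro prob_space_gibbs information_space_axioms.intro) simp_all
  have "has_bochner_integral (gibbs M R \<psi>) ?u (bregman_F M N R \<phi> \<psi>)"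
    using assms prob_space_imp_sigma_finite by (intro has_bochner_integral_gibbs_log_ratio) simp_all
  then have "integrable (gibbs M R \<psi>) ?u"
    by (rule integrable.intros)
  then have "integrable (gibbs M R \<phi>) (\<lambda>p. exp (?u p) * log (exp 1) (exp (?u p)))"
    unfolding gibbs_\<psi> by (simp add: integrable_density log_def)
  then have "0 \<le> KL_divergence (exp 1) (gibbs M R \<phi>) (gibbs M R \<psi>)"
    unfolding gibbs_\<psi>
    by (intro gibbs_\<phi>.KL_nonneg) (simp_all add: gibbs_\<psi>[symmetric] prob_space_gibbs assms)
  then show ?thesis
    using assms by (simp add: KL_gibbs_eq_bregman_F)
qed

lemma Fstar_ymarg_gibbs:
  assumes "prob_space M"
    and [measurable]: "\<psi> \<in> borel_measurable N" and "cplus_welldef M R \<psi>"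
    and "integrable M (cplus M R \<psi>)" and "integrable (ymarg N (gibbs M R \<psi>)) \<psi>"
  shows "Fstar M N R (ymarg N (gibbs M R \<psi>))
           = ereal ((\<integral>y. \<psi> y \<partial>ymarg N (gibbs M R \<psi>)) - Ffun M R \<psi>)"
  unfolding Fstar_def
proof (rule antisym[OF SUP_least SUP_upper])
  fix \<theta> assume "\<theta> \<in> {\<theta>. Fdom M N R \<theta> \<and> integrable (ymarg N (gibbs M R \<psi>)) \<theta>}"
  then have "0 \<le> bregman_F M N R \<theta> \<psi>" and "integrable (ymarg N (gibbs M R \<psi>)) \<theta>"
    using assms by (auto simp: Fdom_def intro!: bregman_F_nonneg)
  then show "ereal ((\<integral>y. \<theta> y \<partial>ymarg N (gibbs M R \<psi>)) - Ffun M R \<theta>)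
               \<le> ereal ((\<integral>y. \<psi> y \<partial>ymarg N (gibbs M R \<psi>)) - Ffun M R \<psi>)"
    using assms by (simp add: bregman_F_def Bochner_Integration.integral_diff)
next
  show "\<psi> \<in> {\<theta>. Fdom M N R \<theta> \<and> integrable (ymarg N (gibbs M R \<psi>)) \<theta>}"
    using assms by (simp add: Fdom_def)
qed

end

theorem lemma3p5:
  fixes M :: "'a measure" and N :: "'b measure" and R :: "('a \<times> 'b) measure"
    and \<phi> \<phi>' :: "'b \<Rightarrow> real"
  assumes "prob_space M" and "prob_space N"
    and "sets R = sets (M \<Otimes>\<^sub>M N)"
    and "\<phi> \<in> borel_measurable N" and "\<phi>' \<in> borel_measurable N"
    and "cplus_welldef M R \<phi>" and "cplus_welldef M R \<phi>'"
    and "integrable M (cplus M R \<phi>)" and "integrable M (cplus M R \<phi>')"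
    and "integrable (ymarg N (gibbs M R \<phi>)) \<phi>" and "integrable (ymarg N (gibbs M R \<phi>)) \<phi>'"
    and "integrable (ymarg N (gibbs M R \<phi>')) \<phi>" and "integrable (ymarg N (gibbs M R \<phi>')) \<phi>'"
  shows "ereal (bregman_F M N R \<phi> \<phi>')
           = bregman_Fstar M N R \<phi> (ymarg N (gibbs M R \<phi>')) (ymarg N (gibbs M R \<phi>))
       \<and> bregman_Fstar M N R \<phi> (ymarg N (gibbs M R \<phi>')) (ymarg N (gibbs M R \<phi>))
           = ereal (KL_divergence (exp 1) (gibbs M R \<phi>) (gibbs M R \<phi>'))"
proof -
  have "bregman_Fstar M N R \<phi> (ymarg N (gibbs M R \<phi>')) (ymarg N (gibbs M R \<phi>))
      = ereal (bregman_F M N R \<phi> \<phi>')"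
    using assms(12,13)
    by (simp add: bregman_Fstar_def bregman_F_def Fstar_ymarg_gibbs[OF assms(3,1)] assms
        Bochner_Integration.integral_diff)
  moreover have "KL_divergence (exp 1) (gibbs M R \<phi>) (gibbs M R \<phi>') = bregman_F M N R \<phi> \<phi>'"
    using assms(3) by (rule KL_gibbs_eq_bregman_F) (use assms in simp_all)
  ultimately show ?thesis
    by simp
qed

end
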